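(* Let $\alpha>-1$, $M\ge0$, $N\ge0$. For $n=1,2,3,\ldots$ let $$L_n^{\alpha,M,N}(x)=A_0L_n^{(\alpha)}(x)+A_1\frac{d}{dx}L_n^{(\alpha)}(x)+A_2\frac{d^2}{dx^2}L_n^{(\alpha)}(x),$$ where $$A_0=1+M\binom{n+\alpha}{n-1}+\frac{n(\alpha+2)-(\alpha+1)}{(\alpha+1)(\alpha+3)}N\binom{n+\alpha}{n-2}+\frac{MN}{(\alpha+1)(\alpha+2)}\binom{n+\alpha}{n-1}\binom{n+\alpha+1}{n-2},$$ $$A_1=M\binom{n+\alpha}{n}+\frac{n-1}{\alpha+1}N\binom{n+\alpha}{n-1}+\frac{2MN}{(\alpha+1)^2}\binom{n+\alpha}{n}\binom{n+\alpha+1}{n-2},$$ $$A_2=\frac{N}{\alpha+1}\binom{n+\alpha}{n-1}+\frac{MN}{(\alpha+1)^2}\binom{n+\alpha}{n}\binom{n+\alpha+1}{n-1}.$$ Then for every $n\ge1$, $y=L_n^{\alpha,M,N}$ satisfies the (infinite order) differential equation $$\sum_{i=0}^{\infty}b_i^*(\alpha,x)y^{(i)}(x)+M\sum_{i=0}^{\infty}c_i^*(\alpha,x)y^{(i)}(x)=0,$$ where $b_i^*(\alpha,x)=\frac{1}{i!}\sum_{j=0}^i(-1)^j\binom{i}{j}(\alpha+1)_{i-j}x^j$ and $c_i^*(\alpha,x)=\frac{(-1)^i}{i!}x^i$ for $i=0,1,2,\ldots$.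
   Context: $L_n^{(\alpha)}(x)=\binom{n+\alpha}{n}\,{}_1F_1\!\left(\begin{matrix}-n\\ \alpha+1\end{matrix};x\right)=\sum_{k=0}^n\frac{(-n)_k}{(\alpha+1)_k}\binom{n+\alpha}{n}\frac{x^k}{k!}$ is the classical Laguerre polynomial; $(a)_k$ is the Pochhammer symbol and $\binom{\gamma}{m}$ the generalized binomial coefficient (zero when $m<0$). The polynomials $L_n^{\alpha,M,N}$ are orthogonal with respect to the Sobolev inner product $\langle f,g\rangle=\frac{1}{\Gamma(\alpha+1)}\int_0^\infty x^\alpha e^{-x}f(x)g(x)\,dx+Mf(0)g(0)+Nf'(0)g'(0)$. The infinite sums are finite when applied to polynomials. *)

theory Defs
  imports "HOL-Analysis.Analysis" "HOL-Computational_Algebra.Polynomial"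
begin

definition gbinom :: "real \<Rightarrow> int \<Rightarrow> real" where
  "gbinom g m = (if m < 0 then 0 else g gchoose (nat m))"

definition laguerre :: "nat \<Rightarrow> real \<Rightarrow> real poly" where
  "laguerre n a = (\<Sum>k\<le>n. monom (pochhammer (- real n) k / pochhammer (a + 1) k
        * gbinom (real n + a) (int n) / fact k) k)"

definition sobA0 :: "real \<Rightarrow> real \<Rightarrow> real \<Rightarrow> nat \<Rightarrow> real" where
  "sobA0 a M N n = 1 + M * gbinom (real n + a) (int n - 1)
     + (real n * (a + 2) - (a + 1)) / ((a + 1) * (a + 3)) * N * gbinom (real n + a) (int n - 2)
     + M * N / ((a + 1) * (a + 2)) * gbinom (real n + a) (int n - 1) * gbinom (real n + a + 1) (int n - 2)"

definition sobA1 :: "real \<Rightarrow> real \<Rightarrow> real \<Rightarrow> nat \<Rightarrow> real" where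
  "sobA1 a M N n = M * gbinom (real n + a) (int n)
     + (real n - 1) / (a + 1) * N * gbinom (real n + a) (int n - 1)
     + 2 * M * N / (a + 1)^2 * gbinom (real n + a) (int n) * gbinom (real n + a + 1) (int n - 2)"

definition sobA2 :: "real \<Rightarrow> real \<Rightarrow> real \<Rightarrow> nat \<Rightarrow> real" where
  "sobA2 a M N n = N / (a + 1) * gbinom (real n + a) (int n - 1)
     + M * N / (a + 1)^2 * gbinom (real n + a) (int n) * gbinom (real n + a + 1) (int n - 1)"

definition sob_laguerre :: "real \<Rightarrow> real \<Rightarrow> real \<Rightarrow> nat \<Rightarrow> real poly" where
  "sob_laguerre a M N n =
     smult (sobA0 a M N n) (laguerre n a)
     + smult (sobA1 a M N n) (pderiv (laguerre n a))
     + smult (sobA2 a M N n) (pderiv (pderiv (laguerre n a)))"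

definition bstar :: "nat \<Rightarrow> real \<Rightarrow> real \<Rightarrow> real" where
  "bstar i a x = 1 / fact i * (\<Sum>j\<le>i. (-1)^j * real (i choose j) * pochhammer (a + 1) (i - j) * x^j)"

definition cstar :: "nat \<Rightarrow> real \<Rightarrow> real" where
  "cstar i x = (-1)^i / fact i * x^i"

end

theory Submission
  imports Defs "HOL-Computational_Algebra.Formal_Power_Series"
begin

(* Expanding b*_i and Taylor-expanding each y^(m) about x shows that the first sum does not
   depend on x: it equals sum_m (alpha+1)_m [x^m] y, the Laguerre moment functional applied to y.
   By Taylor's formula again the second sum is y(0). The equation therefore says that y is
   orthogonal to the constant 1 in the Sobolev inner product (the N-term drops out since 1' = 0).
   The derivatives of L_n^(alpha) are, up to sign, Laguerre polynomials with shifted parameter,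
   whose moments are given by the Chu-Vandermonde identity; what remains is an identity between
   binomial coefficients, which holds for all M and N. *)

lemma higher_pderiv_eq_0:
  fixes p :: "'a::{comm_semiring_1,semiring_no_zero_divisors,semiring_char_0} poly"
  assumes "degree p < i"
  shows "(pderiv ^^ i) p = 0"
  using assms by (intro poly_eqI) (simp add: coeff_higher_pderiv coeff_eq_0)

lemma poly_taylor_higher_pderiv:
  fixes p :: "real poly"
  assumes "degree p \<le> K"
  shows "poly p (x + h) = (\<Sum>j\<le>K. poly ((pderiv ^^ j) p) x / fact j * h ^ j)"
proof -
  define D where "D j t = poly ((pderiv ^^ j) p) (x + t)" for j t
  have "DERIV (D j) t :> D (Suc j) t" for j t
    unfolding D_def by (auto intro!: derivative_eq_intros simp: poly_DERIV[THEN DERIV_chain2])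
  then obtain t where
    "D 0 h = (\<Sum>j<Suc K. D j 0 / fact j * h ^ j) + D (Suc K) t / fact (Suc K) * h ^ Suc K"
    using Maclaurin_all_le[of D "D 0" h "Suc K"] by blast
  moreover have "D (Suc K) t = 0"
    unfolding D_def using assms by (simp add: higher_pderiv_eq_0 del: funpow.simps)
  ultimately show ?thesis
    by (simp add: D_def lessThan_Suc_atMost)
qed

lemma suminf_higher_pderiv:
  fixes p :: "real poly"
  assumes "degree p \<le> K"
  shows "(\<Sum>i. f i * poly ((pderiv ^^ i) p) x)
    = (\<Sum>i\<le>K. f i * poly ((pderiv ^^ i) p) x)"
  using assms by (intro suminf_finite) (auto simp: higher_pderiv_eq_0)

lemma gbinom_of_nat: "gbinom g (int k) = g gchoose k"
  by (simp add: gbinom_def)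

lemma gbinom_Suc_Suc: "gbinom (g + 1) (k + 1) = gbinom g k + gbinom g (k + 1)"
proof (cases "k \<ge> 0")
  case True
  then obtain m where k: "k = int m"
    using nonneg_eq_int by blast
  then have k1: "k + 1 = int (Suc m)"
    by simp
  show ?thesis
    unfolding k1 unfolding k gbinom_of_nat
    using gbinomial_Suc_Suc[of g m] by simp
qed (auto simp: gbinom_def)

lemma gbinom_absorption: "(of_int k + 1) * gbinom g (k + 1) = (g - of_int k) * gbinom g k"
proof (cases "k \<ge> 0")
  case True
  then obtain m where k: "k = int m"
    using nonneg_eq_int by blast
  then have k1: "k + 1 = int (Suc m)"
    by simp
  show ?thesis
    unfolding k1 unfolding k gbinom_of_nat
    using gbinomial_absorption[of m g] gbinomial_absorb_comp[of g m] by (simp add: add.commute)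
qed (auto simp: gbinom_def)

lemma gbinom_absorb_comp: "(g + 1 - of_int k) * gbinom (g + 1) k = (g + 1) * gbinom g k"
  using gbinomial_absorb_comp[of "g + 1" "nat k"] by (cases "k \<ge> 0") (simp_all add: gbinom_def)

(* (a+1)_m is the m-th moment of the weight x^a e^-x / Gamma(a+1), so this is the functional
   f |-> int_0^oo f(x) x^a e^-x dx / Gamma(a+1) restricted to polynomials. *)
definition laguerre_functional :: "real \<Rightarrow> real poly \<Rightarrow> real" where
  "laguerre_functional a p = (\<Sum>m\<le>degree p. pochhammer (a + 1) m * coeff p m)"

lemma laguerre_functional_eq_sum:
  assumes "degree p \<le> K"
  shows "laguerre_functional a p = (\<Sum>m\<le>K. pochhammer (a + 1) m * coeff p m)"
  unfolding laguerre_functional_def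
  using assms by (intro sum.mono_neutral_left) (auto simp: coeff_eq_0)

lemma laguerre_functional_add:
  "laguerre_functional a (p + q) = laguerre_functional a p + laguerre_functional a q"
proof -
  define K where "K = max (degree p) (degree q)"
  have "degree p \<le> K" "degree q \<le> K" "degree (p + q) \<le> K"
    unfolding K_def by (auto intro: degree_add_le)
  then show ?thesis
    by (simp add: laguerre_functional_eq_sum[where K = K] algebra_simps sum.distrib)
qed

lemma laguerre_functional_smult:
  "laguerre_functional a (smult c p) = c * laguerre_functional a p"
  using laguerre_functional_eq_sum[OF degree_smult_le, of a c p]
  by (simp add: laguerre_functional_def sum_distrib_left mult_ac)

lemma bstar_eq_sum:
  "bstar i a x = (\<Sum>j\<le>i. pochhammer (a + 1) (i - j) / fact (i - j) * ((- x) ^ j / fact j))"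
  unfolding bstar_def sum_distrib_left
proof (rule sum.cong)
  fix j assume "j \<in> {..i}"
  then have "real (i choose j) = fact i / (fact j * fact (i - j))"
    by (simp add: binomial_fact)
  then show "1 / fact i * ((- 1) ^ j * real (i choose j) * pochhammer (a + 1) (i - j) * x ^ j)
      = pochhammer (a + 1) (i - j) / fact (i - j) * ((- x) ^ j / fact j)"
    by (simp add: power_minus[of x] field_simps)
qed simp

lemma sum_bstar_higher_pderiv:
  assumes "degree p \<le> K"
  shows "(\<Sum>i\<le>K. bstar i a x * poly ((pderiv ^^ i) p) x) = laguerre_functional a p"
proof -
  define f where "f j m = pochhammer (a + 1) m / fact m
      * (poly ((pderiv ^^ j) ((pderiv ^^ m) p)) x / fact j * (- x) ^ j)" for j m
  have "(pderiv ^^ j) ((pderiv ^^ (i - j)) p) = (pderiv ^^ i) p" if "j \<le> i" for i j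
    using that by (metis funpow_add le_add_diff_inverse o_apply)
  then have "(\<Sum>i\<le>K. bstar i a x * poly ((pderiv ^^ i) p) x)
      = (\<Sum>i\<le>K. \<Sum>j\<le>i. f j (i - j))"
    unfolding bstar_eq_sum sum_distrib_right f_def by (intro sum.cong refl) simp
  also have "\<dots> = (\<Sum>(j, m)\<in>{(j, m). j + m \<le> K}. f j m)"
    by (rule sum.triangle_reindex_eq[symmetric])
  also have "\<dots> = (\<Sum>(m, j)\<in>Sigma {..K} (\<lambda>m. {..K - m}). f j m)"
    by (rule sum.reindex_bij_witness[where i = prod.swap and j = prod.swap]) auto
  also have "\<dots> = (\<Sum>m\<le>K. \<Sum>j\<le>K - m. f j m)"
    by (simp add: sum.Sigma)
  also have "\<dots> = (\<Sum>m\<le>K. pochhammer (a + 1) m / fact m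
      * poly ((pderiv ^^ m) p) (x + - x))"
    unfolding f_def sum_distrib_left[symmetric]
    using assms by (intro sum.cong refl poly_taylor_higher_pderiv[symmetric, THEN arg_cong])
      (simp add: degree_higher_pderiv)
  also have "\<dots> = laguerre_functional a p"
    using assms by (simp add: laguerre_functional_eq_sum[where K = K] poly_0_coeff_0
        coeff_higher_pderiv flip: pochhammer_fact)
  finally show ?thesis .
qed

lemma sum_cstar_higher_pderiv:
  assumes "degree p \<le> K"
  shows "(\<Sum>i\<le>K. cstar i x * poly ((pderiv ^^ i) p) x) = poly p 0"
  using poly_taylor_higher_pderiv[OF assms, of x "- x"]
  by (simp add: cstar_def power_minus[of x] mult_ac)

lemma gbinom_of_nat_add: "gbinom (real n + a) (int n) = pochhammer (a + 1) n / fact n"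
  by (simp add: gbinom_of_nat gbinomial_pochhammer' add_ac)

lemma coeff_laguerre:
  "coeff (laguerre n a) k
     = pochhammer (- real n) k * pochhammer (a + 1) n / (pochhammer (a + 1) k * fact k * fact n)"
proof (cases "k \<le> n")
  case False
  then have "pochhammer (- real n) k = 0"
    by (auto simp: pochhammer_eq_0_iff)
  with False show ?thesis
    by (simp add: laguerre_def coeff_sum)
qed (simp add: laguerre_def coeff_sum coeff_monom gbinom_of_nat_add)

lemma degree_laguerre: "degree (laguerre n a) \<le> n"
  unfolding laguerre_def by (intro degree_sum_le) (auto intro: order.trans[OF degree_monom_le])

lemma poly_laguerre_0: "poly (laguerre n a) 0 = gbinom (real n + a) (int n)"
  by (simp add: poly_0_coeff_0 coeff_laguerre gbinom_of_nat_add)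

lemma pderiv_laguerre:
  assumes "a > -1"
  shows "pderiv (laguerre (Suc n) a) = - laguerre n (a + 1)"
proof (rule poly_eqI)
  fix k
  have rec_n: "pochhammer (- real (Suc n)) (Suc k) = - (real n + 1) * pochhammer (- real n) k"
    by (simp add: pochhammer_rec)
  have rec_a: "pochhammer (a + 1) (Suc m) = (a + 1) * pochhammer (a + 1 + 1) m" for m
    by (simp add: pochhammer_rec)
  have "pochhammer (a + 1 + 1) k \<noteq> 0" "a + 1 \<noteq> 0"
    using assms pochhammer_pos[of "a + 1 + 1" k] by auto
  then show "coeff (pderiv (laguerre (Suc n) a)) k = coeff (- laguerre n (a + 1)) k"
    unfolding coeff_pderiv coeff_minus coeff_laguerre rec_n rec_a fact_Suc
    by (simp add: divide_simps del: of_nat_Suc) (simp add: algebra_simps)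
qed

lemma higher_pderiv_laguerre:
  assumes "a > -1" and "j \<le> n"
  shows "(pderiv ^^ j) (laguerre n a) = smult ((-1) ^ j) (laguerre (n - j) (a + real j))"
  using assms(2)
proof (induction j)
  case (Suc j)
  then have "n - j = Suc (n - Suc j)"
    by simp
  with Suc assms(1) show ?case
    by (simp add: pderiv_smult pderiv_laguerre add_ac)
qed simp

lemma laguerre_functional_laguerre:
  assumes "a > -1" and "b > -1"
  shows "laguerre_functional a (laguerre m b) = pochhammer (b - a) m / fact m"
proof -
  have pos: "pochhammer (b + 1) k > 0" for k
    using assms by (intro pochhammer_pos) simp
  have "laguerre_functional a (laguerre m b) = pochhammer (b + 1) m / fact m
      * (\<Sum>k\<le>m. pochhammer (a + 1) k * pochhammer (- real m) k
          / (fact k * pochhammer (b + 1) k))"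
    unfolding laguerre_functional_eq_sum[OF degree_laguerre] coeff_laguerre sum_distrib_left
    by (intro sum.cong refl) (simp add: field_simps)
  also have "(\<Sum>k\<le>m. pochhammer (a + 1) k * pochhammer (- real m) k
          / (fact k * pochhammer (b + 1) k))
      = pochhammer (b - a) m / pochhammer (b + 1) m"
    using Vandermonde_pochhammer[of m "b + 1" "a + 1"] assms by (simp add: atLeast0AtMost)
  finally show ?thesis
    using pos[of m] by simp
qed

lemma laguerre_functional_higher_pderiv_laguerre:
  assumes "a > -1"
  shows "laguerre_functional a ((pderiv ^^ j) (laguerre n a))
    = (-1) ^ j * gbinom (real n - 1) (int n - int j)"
proof (cases "j \<le> n")
  case True
  have "gbinom (real n - 1) (int n - int j) = gbinom (real n - 1) (int (n - j))"
    using True by (simp add: of_nat_diff)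
  also have "\<dots> = (real n - 1) gchoose (n - j)"
    by (rule gbinom_of_nat)
  also have "\<dots> = pochhammer (real j) (n - j) / fact (n - j)"
    using True by (simp add: gbinomial_pochhammer' of_nat_diff)
  moreover have "laguerre_functional a (laguerre (n - j) (a + real j))
      = pochhammer (real j) (n - j) / fact (n - j)"
    using assms by (simp add: laguerre_functional_laguerre)
  ultimately show ?thesis
    using assms True by (simp add: higher_pderiv_laguerre laguerre_functional_smult)
next
  case False
  then show ?thesis
    using degree_laguerre[of n a]
    by (simp add: higher_pderiv_eq_0 laguerre_functional_def gbinom_def)
qed

lemma poly_higher_pderiv_laguerre_0:
  assumes "a > -1"
  shows "poly ((pderiv ^^ j) (laguerre n a)) 0 = (-1) ^ j * gbinom (real n + a) (int n - int j)"
proof (cases "j \<le> n")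
  case True
  then have "poly ((pderiv ^^ j) (laguerre n a)) 0
      = (-1) ^ j * poly (laguerre (n - j) (a + real j)) 0"
    using assms by (simp add: higher_pderiv_laguerre)
  also have "poly (laguerre (n - j) (a + real j)) 0
      = gbinom (real (n - j) + (a + real j)) (int (n - j))"
    by (rule poly_laguerre_0)
  also have "\<dots> = gbinom (real n + a) (int n - int j)"
    using True by (simp add: of_nat_diff)
  finally show ?thesis .
next
  case False
  then show ?thesis
    using degree_laguerre[of n a] by (simp add: higher_pderiv_eq_0 gbinom_def)
qed

lemma degree_sob_laguerre: "degree (sob_laguerre a M N n) \<le> n"
  unfolding sob_laguerre_def using degree_laguerre[of n a]
  by (intro degree_add_le order.trans[OF degree_smult_le]) (auto simp: degree_pderiv)

lemma laguerre_functional_pderivs_laguerre: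
  assumes "a > -1" and "n \<ge> 1"
  shows "laguerre_functional a (laguerre n a) = 0"
    and "laguerre_functional a (pderiv (laguerre n a)) = -1"
    and "laguerre_functional a (pderiv (pderiv (laguerre n a))) = real n - 1"
proof -
  have diag: "gbinom (real n - 1) (int n - 1) = 1"
  proof -
    have "gbinom (real n - 1) (int n - 1) = gbinom (real (n - 1)) (int (n - 1))"
      using assms(2) by (simp add: of_nat_diff)
    then show ?thesis
      by (simp add: gbinom_of_nat flip: binomial_gbinomial)
  qed
  have above: "gbinom (real n - 1) (int n) = 0"
    using gbinom_absorption[of "int n - 1" "real n - 1"] assms(2) by simp
  have below: "gbinom (real n - 1) (int n - 2) = real n - 1"
    using gbinom_absorption[of "int n - 2" "real n - 1"] diag by (simp add: algebra_simps)
  show "laguerre_functional a (laguerre n a) = 0"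
    using laguerre_functional_higher_pderiv_laguerre[OF assms(1), of 0 n] above by simp
  show "laguerre_functional a (pderiv (laguerre n a)) = -1"
    using laguerre_functional_higher_pderiv_laguerre[OF assms(1), of 1 n] diag by simp
  show "laguerre_functional a (pderiv (pderiv (laguerre n a))) = real n - 1"
    using laguerre_functional_higher_pderiv_laguerre[OF assms(1), of 2 n] below
    by (simp add: numeral_2_eq_2)
qed

lemma sob_laguerre_orthogonal_one:
  assumes "a > -1" and "n \<ge> 1"
  shows "laguerre_functional a (sob_laguerre a M N n) + M * poly (sob_laguerre a M N n) 0 = 0"
proof -
  let ?L = "laguerre n a" and ?g = "real n + a"
  have P1: "poly (pderiv ?L) 0 = - gbinom ?g (int n - 1)"
    using poly_higher_pderiv_laguerre_0[OF assms(1), of 1 n] by simp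
  have P2: "poly (pderiv (pderiv ?L)) 0 = gbinom ?g (int n - 2)"
    using poly_higher_pderiv_laguerre_0[OF assms(1), of 2 n] by (simp add: numeral_2_eq_2)
  (* All binomial coefficients in A0, A1, A2 and y(0) are rational multiples of c1, which turns
     the claim into an identity between rational functions. *)
  define c1 where "c1 = gbinom ?g (int n - 1)"
  have nz: "a + 1 \<noteq> 0" "a + 2 \<noteq> 0" "a + 3 \<noteq> 0" "real n \<noteq> 0"
    using assms by auto
  have C0: "gbinom ?g (int n) = (a + 1) * c1 / real n"
    using gbinom_absorption[of "int n - 1" ?g] nz unfolding c1_def by (simp add: field_simps)
  have C2: "gbinom ?g (int n - 2) = (real n - 1) * c1 / (a + 2)"
    using gbinom_absorption[of "int n - 2" ?g] nz unfolding c1_def by (simp add: field_simps)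
  have D1: "gbinom (?g + 1) (int n - 1) = (real n - 1) * c1 / (a + 2) + c1"
    using gbinom_Suc_Suc[of ?g "int n - 2"] C2 unfolding c1_def by simp
  have "(a + 3) * gbinom (?g + 1) (int n - 2) = (?g + 1) * gbinom ?g (int n - 2)"
    using gbinom_absorb_comp[of ?g "int n - 2"] by (simp add: algebra_simps)
  then have D2: "gbinom (?g + 1) (int n - 2) = (?g + 1) * gbinom ?g (int n - 2) / (a + 3)"
    using nz by (simp add: eq_divide_eq ac_simps)
  show ?thesis
    unfolding sob_laguerre_def laguerre_functional_add laguerre_functional_smult poly_add poly_smult
      laguerre_functional_pderivs_laguerre[OF assms] poly_laguerre_0 P1 P2
      sobA0_def sobA1_def sobA2_def c1_def[symmetric] C0 C2 D1 D2
    using nz by (simp add: divide_simps) algebra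
qed

theorem mainTheorem3:
  fixes a M N :: real and n :: nat
  assumes "a > -1" and "M \<ge> 0" and "N \<ge> 0" and "n \<ge> 1"
  shows "\<forall>x::real.
    (\<Sum>i. bstar i a x * poly ((pderiv ^^ i) (sob_laguerre a M N n)) x)
    + M * (\<Sum>i. cstar i x * poly ((pderiv ^^ i) (sob_laguerre a M N n)) x) = 0"
proof
  fix x :: real
  have deg: "degree (sob_laguerre a M N n) \<le> n"
    by (rule degree_sob_laguerre)
  show "(\<Sum>i. bstar i a x * poly ((pderiv ^^ i) (sob_laguerre a M N n)) x)
      + M * (\<Sum>i. cstar i x * poly ((pderiv ^^ i) (sob_laguerre a M N n)) x) = 0"
    unfolding suminf_higher_pderiv[OF deg]
      sum_bstar_higher_pderiv[OF deg] sum_cstar_higher_pderiv[OF deg]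
    using sob_laguerre_orthogonal_one[OF assms(1,4)] .
qed

end
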